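(* Let $F$ be a global function field with full constant field $k=\mathbb{F}_q$, let $x\in F$ be transcendental over $k$ with $n=[F:k(x)]$ and $\gcd(n,q)=1$, and let $S=\{P_1,\dots,P_{|S|}\}$ be a finite set of places of $F$ containing all infinite places of $F/k(x)$. If $\{b_1,\dots,b_{|S|-1}\}$ is an LLL-reduced basis of the $S$-unit lattice $\Lambda_S$, then \[ \max_{1\le i\le |S|-1}\|b_i\|_\infty\le 2^{(|S|-1)(|S|-2)/4}R_S. \]
   Context: The infinite places of $F/k(x)$ are the poles of $x$. $O_S^\times$ denotes the group of $S$-units of $F$. With a fixed ordering of $S$, let $\Phi_S:F^\times\to\mathbb{Z}^{|S|}$, $\alpha\mapsto(-v_{P_1}(\alpha)\deg P_1,\dots,-v_{P_{|S|}}(\alpha)\deg P_{|S|})$, where $v_P$ is the discrete valuation at $P$. The $S$-unit lattice is $\Lambda_S=\Phi_S(O_S^\times)$, a lattice of rank $|S|-1$ in $\mathbb{Z}^{|S|}$, and $R_S=\det\Lambda_S$ is its determinant (covolume). For $v\in\mathbb{Z}^{|S|}$, $\|v\|_\infty$ is the maximum absolute value of its entries. *)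

theory Defs
  imports "HOL-Computational_Algebra.Polynomial" "Jordan_Normal_Form.Determinant"
begin

(* The global field F is the whole type 'a :: field; k is a subset of it. *)

definition subfield :: "'a::field set \<Rightarrow> bool" where
  "subfield K \<longleftrightarrow> 0 \<in> K \<and> 1 \<in> K \<and>
     (\<forall>a\<in>K. \<forall>b\<in>K. a + b \<in> K \<and> a * b \<in> K) \<and>
     (\<forall>a\<in>K. - a \<in> K \<and> inverse a \<in> K)"

definition algebraic_over :: "'a::field set \<Rightarrow> 'a \<Rightarrow> bool" where
  "algebraic_over K z \<longleftrightarrow>
     (\<exists>p::'a poly. p \<noteq> 0 \<and> (\<forall>i. coeff p i \<in> K) \<and> poly p z = 0)"

definition rat_fun_field :: "'a::field set \<Rightarrow> 'a \<Rightarrow> 'a set" where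
  "rat_fun_field K x = {poly p x / poly q x | p q.
      (\<forall>i. coeff p i \<in> K) \<and> (\<forall>i. coeff q i \<in> K) \<and> poly q x \<noteq> 0}"

text \<open>B is a K-basis of M modulo N (e.g. of the residue field O_P/P, or of F when N = {0}).\<close>
definition basis_mod :: "'a::field set \<Rightarrow> 'a set \<Rightarrow> 'a set \<Rightarrow> 'a set \<Rightarrow> bool" where
  "basis_mod K M N B \<longleftrightarrow> finite B \<and> B \<subseteq> M \<and>
     (\<forall>z\<in>M. \<exists>c. (\<forall>b\<in>B. c b \<in> K) \<and> z - (\<Sum>b\<in>B. c b * b) \<in> N) \<and>
     (\<forall>c. (\<forall>b\<in>B. c b \<in> K) \<longrightarrow> (\<Sum>b\<in>B. c b * b) \<in> N \<longrightarrow> (\<forall>b\<in>B. c b = 0))"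

definition finite_dim_mod :: "'a::field set \<Rightarrow> 'a set \<Rightarrow> 'a set \<Rightarrow> bool" where
  "finite_dim_mod K M N \<longleftrightarrow> (\<exists>B. basis_mod K M N B)"

definition dim_mod :: "'a::field set \<Rightarrow> 'a set \<Rightarrow> 'a set \<Rightarrow> nat" where
  "dim_mod K M N = (THE n. \<exists>B. basis_mod K M N B \<and> card B = n)"

definition field_degree :: "'a::field set \<Rightarrow> nat" where
  "field_degree K = dim_mod K UNIV {0}"

definition valuation_ring :: "'a::field set \<Rightarrow> 'a set \<Rightarrow> bool" where
  "valuation_ring k Ov \<longleftrightarrow> k \<subseteq> Ov \<and> k \<noteq> Ov \<and> Ov \<noteq> UNIV \<and> 1 \<in> Ov \<and>
     (\<forall>a\<in>Ov. \<forall>b\<in>Ov. a + b \<in> Ov \<and> a * b \<in> Ov \<and> - a \<in> Ov) \<and>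
     (\<forall>z. z \<noteq> 0 \<longrightarrow> z \<in> Ov \<or> inverse z \<in> Ov)"

text \<open>A place of F/k is the maximal ideal of a valuation ring of F/k.\<close>
definition is_place :: "'a::field set \<Rightarrow> 'a set \<Rightarrow> bool" where
  "is_place k P \<longleftrightarrow> (\<exists>Ov. valuation_ring k Ov \<and> P = {z\<in>Ov. z = 0 \<or> inverse z \<notin> Ov})"

text \<open>The valuation ring O_P of a place P.\<close>
definition ring_of :: "'a::field set \<Rightarrow> 'a set" where
  "ring_of P = {z. \<forall>p\<in>P. z * p \<in> P}"

text \<open>Discrete valuation v_P(z) for z \<noteq> 0: z = t^m u with t a prime element, u a unit of O_P.\<close>
definition val :: "'a::field set \<Rightarrow> 'a \<Rightarrow> int" where
  "val P z = (THE m::int. \<exists>t. t \<in> P \<and> P = {t * u | u. u \<in> ring_of P} \<and>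
                  z * t powi (- m) \<in> ring_of P - P)"

definition place_deg :: "'a::field set \<Rightarrow> 'a set \<Rightarrow> nat" where
  "place_deg k P = dim_mod k (ring_of P) P"

definition S_units :: "'a::field set \<Rightarrow> 'a set set \<Rightarrow> 'a set" where
  "S_units k S = {z. z \<noteq> 0 \<and> (\<forall>P. is_place k P \<and> P \<notin> S \<longrightarrow> z \<in> ring_of P - P)}"

text \<open>Phi_S, for the ordering of S given by the list Ps; vectors in Z^|S| are functions
  nat => int (zero outside the index range {..<|S|}).\<close>
definition Phi :: "'a::field set \<Rightarrow> 'a set list \<Rightarrow> 'a \<Rightarrow> nat \<Rightarrow> int" where
  "Phi k Ps z = (\<lambda>i. if i < length Ps then - val (Ps ! i) z * int (place_deg k (Ps ! i)) else 0)"

definition S_unit_lattice :: "'a::field set \<Rightarrow> 'a set list \<Rightarrow> (nat \<Rightarrow> int) set" where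
  "S_unit_lattice k Ps = Phi k Ps ` S_units k (set Ps)"

(* Lattice geometry in Z^s \<subseteq> R^s; a list of m vectors is a function nat => (nat => _) *)

definition ip :: "nat \<Rightarrow> (nat \<Rightarrow> real) \<Rightarrow> (nat \<Rightarrow> real) \<Rightarrow> real" where
  "ip s u v = (\<Sum>j<s. u j * v j)"

definition rvec :: "(nat \<Rightarrow> int) \<Rightarrow> nat \<Rightarrow> real" where
  "rvec v = (\<lambda>j. real_of_int (v j))"

definition inf_norm :: "nat \<Rightarrow> (nat \<Rightarrow> int) \<Rightarrow> int" where
  "inf_norm s v = Max ((\<lambda>j. \<bar>v j\<bar>) ` {..<s})"

definition lattice_basis :: "nat \<Rightarrow> nat \<Rightarrow> (nat \<Rightarrow> int) set \<Rightarrow> (nat \<Rightarrow> nat \<Rightarrow> int) \<Rightarrow> bool" where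
  "lattice_basis s m L b \<longleftrightarrow>
     (\<forall>i<m. \<forall>j. s \<le> j \<longrightarrow> b i j = 0) \<and>
     L = {(\<lambda>j. \<Sum>i<m. c i * b i j) | c :: nat \<Rightarrow> int. True} \<and>
     (\<forall>c :: nat \<Rightarrow> real. (\<forall>j<s. (\<Sum>i<m. c i * real_of_int (b i j)) = 0) \<longrightarrow> (\<forall>i<m. c i = 0))"

fun gso :: "nat \<Rightarrow> (nat \<Rightarrow> nat \<Rightarrow> real) \<Rightarrow> nat \<Rightarrow> nat \<Rightarrow> real" where
  "gso s b i = (\<lambda>k. b i k - (\<Sum>j<i. (ip s (b i) (gso s b j) / ip s (gso s b j) (gso s b j)) * gso s b j k))"

definition gs_coeff :: "nat \<Rightarrow> (nat \<Rightarrow> nat \<Rightarrow> real) \<Rightarrow> nat \<Rightarrow> nat \<Rightarrow> real" where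
  "gs_coeff s b i j = ip s (b i) (gso s b j) / ip s (gso s b j) (gso s b j)"

definition LLL_reduced :: "nat \<Rightarrow> nat \<Rightarrow> (nat \<Rightarrow> nat \<Rightarrow> int) \<Rightarrow> bool" where
  "LLL_reduced s m b \<longleftrightarrow>
     (let rb = (\<lambda>i. rvec (b i)) in
       (\<forall>i<m. \<forall>j<i. \<bar>gs_coeff s rb i j\<bar> \<le> 1/2) \<and>
       (\<forall>i. 0 < i \<and> i < m \<longrightarrow>
          ip s (gso s rb i) (gso s rb i) \<ge>
          (3/4 - (gs_coeff s rb i (i - 1))\<^sup>2) * ip s (gso s rb (i - 1)) (gso s rb (i - 1))))"

definition gram_det :: "nat \<Rightarrow> nat \<Rightarrow> (nat \<Rightarrow> nat \<Rightarrow> int) \<Rightarrow> real" where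
  "gram_det s m b = det (mat m m (\<lambda>(i, j). ip s (rvec (b i)) (rvec (b j))))"

text \<open>Determinant (covolume) of a lattice of rank m in Z^s: sqrt of the Gram determinant
  of any basis (independent of the basis).\<close>
definition lattice_det :: "nat \<Rightarrow> nat \<Rightarrow> (nat \<Rightarrow> int) set \<Rightarrow> real" where
  "lattice_det s m L = (THE d. \<exists>b. lattice_basis s m L b \<and> d = sqrt (gram_det s m b))"

end

theory Submission
  imports Defs
begin

text \<open>Only the integrality of \<open>\<Lambda>\<^sub>S\<close> matters: its basis vectors are nonzero integer
  vectors, so \<open>\<parallel>b\<^sub>l\<parallel> \<ge> 1\<close> and \<open>\<parallel>b\<^sub>i\<parallel>\<^sup>2 \<le> \<Prod>\<^sub>l \<parallel>b\<^sub>l\<parallel>\<^sup>2\<close>. For an LLL-reduced basis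
  \<open>\<parallel>b\<^sub>l\<parallel>\<^sup>2 \<le> 2\<^sup>l \<parallel>b\<^sup>*\<^sub>l\<parallel>\<^sup>2\<close>, where \<open>b\<^sup>*\<close> is the Gram--Schmidt orthogonalisation, and the
  Gram determinant of any basis is \<open>\<Prod>\<^sub>l \<parallel>b\<^sup>*\<^sub>l\<parallel>\<^sup>2 = R\<^sub>S\<^sup>2\<close>. Hence
  \<open>\<parallel>b\<^sub>i\<parallel>\<^sub>\<infinity>\<^sup>2 \<le> \<parallel>b\<^sub>i\<parallel>\<^sup>2 \<le> 2 ^ (m(m-1)/2) R\<^sub>S\<^sup>2\<close> with \<open>m = |S| - 1\<close>.\<close>

abbreviation gso_norm_sq :: "nat \<Rightarrow> (nat \<Rightarrow> nat \<Rightarrow> real) \<Rightarrow> nat \<Rightarrow> real" where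
  "gso_norm_sq s b l \<equiv> ip s (gso s b l) (gso s b l)"

abbreviation rvecs :: "(nat \<Rightarrow> nat \<Rightarrow> int) \<Rightarrow> nat \<Rightarrow> nat \<Rightarrow> real" where
  "rvecs b \<equiv> (\<lambda>i. rvec (b i))"

lemma ip_commute: "ip s u v = ip s v u"
  by (simp add: ip_def mult.commute)

lemma ip_self_nonneg: "0 \<le> ip s u u"
  by (simp add: ip_def sum_nonneg)

lemma ip_self_eq_0_D:
  assumes "ip s u u = 0" "j < s"
  shows "u j = 0"
proof -
  have "\<forall>j\<in>{..<s}. u j * u j = 0"
    using assms(1) unfolding ip_def by (subst sum_nonneg_eq_0_iff[symmetric]) auto
  thus ?thesis using assms(2) by simp
qed

lemma ip_eq_0_if_self_eq_0:
  assumes "ip s u u = 0"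
  shows "ip s v u = 0"
  using ip_self_eq_0_D[OF assms] unfolding ip_def by simp

lemma ip_diff_sum_left:
  "ip s (\<lambda>k. a k - (\<Sum>j<i. c j * g j k)) v = ip s a v - (\<Sum>j<i. c j * ip s (g j) v)"
  unfolding ip_def
  by (simp add: algebra_simps sum_subtractf sum_distrib_left sum_distrib_right sum.swap[of _ "{..<s}"])

lemma component_sq_le_ip_self: "j < s \<Longrightarrow> u j * u j \<le> ip s u u"
  unfolding ip_def by (intro member_le_sum) auto

subsection \<open>Gram--Schmidt orthogonalisation\<close>

declare gso.simps[simp del]

lemma gso_eq: "gso s b i = (\<lambda>k. b i k - (\<Sum>j<i. gs_coeff s b i j * gso s b j k))"
  by (subst gso.simps) (simp add: gs_coeff_def)

lemma gso_orthogonal: "j < i \<Longrightarrow> ip s (gso s b i) (gso s b j) = 0"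
proof (induction i arbitrary: j rule: less_induct)
  case (less i)
  have orth: "ip s (gso s b l) (gso s b j) = 0" if "l < i" "l \<noteq> j" for l
  proof (cases "l < j")
    case True
    show ?thesis by (subst ip_commute) (rule less.IH[OF less.prems True])
  next
    case False
    thus ?thesis using less.IH[of l j] that by simp
  qed
  have "ip s (gso s b i) (gso s b j)
      = ip s (b i) (gso s b j) - (\<Sum>l<i. gs_coeff s b i l * ip s (gso s b l) (gso s b j))"
    by (subst gso_eq) (rule ip_diff_sum_left)
  also have "(\<Sum>l<i. gs_coeff s b i l * ip s (gso s b l) (gso s b j))
      = gs_coeff s b i j * gso_norm_sq s b j"
    using less.prems orth by (subst sum.remove[of _ j]) auto
  also have "ip s (b i) (gso s b j) - gs_coeff s b i j * gso_norm_sq s b j = 0"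
    by (cases "gso_norm_sq s b j = 0") (simp_all add: ip_eq_0_if_self_eq_0 gs_coeff_def)
  finally show ?case .
qed

lemma gso_orthogonal':
  assumes "i \<noteq> j"
  shows "ip s (gso s b i) (gso s b j) = 0"
proof (cases "j < i")
  case False
  with assms have "i < j" by simp
  thus ?thesis by (subst ip_commute) (rule gso_orthogonal)
qed (rule gso_orthogonal)

definition gs_mu :: "nat \<Rightarrow> (nat \<Rightarrow> nat \<Rightarrow> real) \<Rightarrow> nat \<Rightarrow> nat \<Rightarrow> real" where
  "gs_mu s b i l = (if l < i then gs_coeff s b i l else if l = i then 1 else 0)"

lemma sum_gs_mu_row:
  assumes "i < m"
  shows "(\<Sum>l<m. gs_mu s b i l * f l) = (\<Sum>l<i. gs_coeff s b i l * f l) + f i"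
proof -
  have "(\<Sum>l<m. gs_mu s b i l * f l) = (\<Sum>l<Suc i. gs_mu s b i l * f l)"
    using assms by (intro sum.mono_neutral_right) (auto simp: gs_mu_def)
  thus ?thesis by (simp add: gs_mu_def)
qed

lemma vec_eq_sum_gso: "i < m \<Longrightarrow> b i k = (\<Sum>l<m. gs_mu s b i l * gso s b l k)"
  by (simp add: sum_gs_mu_row gso_eq[of s b i])

lemma ip_eq_sum_gso:
  assumes "i < m" "j < m"
  shows "ip s (b i) (b j) = (\<Sum>l<m. gs_mu s b i l * gs_mu s b j l * gso_norm_sq s b l)"
proof -
  have "ip s (b i) (b j)
      = (\<Sum>k<s. (\<Sum>l<m. gs_mu s b i l * gso s b l k) * (\<Sum>l'<m. gs_mu s b j l' * gso s b l' k))"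
    unfolding ip_def using vec_eq_sum_gso[OF assms(1)] vec_eq_sum_gso[OF assms(2)] by simp
  also have "\<dots> = (\<Sum>k<s. \<Sum>l<m. \<Sum>l'<m. gs_mu s b i l * gs_mu s b j l' * (gso s b l k * gso s b l' k))"
    by (simp add: sum_product algebra_simps)
  also have "\<dots> = (\<Sum>l<m. \<Sum>l'<m. \<Sum>k<s. gs_mu s b i l * gs_mu s b j l' * (gso s b l k * gso s b l' k))"
    by (subst sum.swap) (rule sum.cong[OF refl], rule sum.swap)
  also have "\<dots> = (\<Sum>l<m. \<Sum>l'<m. gs_mu s b i l * gs_mu s b j l' * ip s (gso s b l) (gso s b l'))"
    unfolding ip_def by (simp add: sum_distrib_left)
  also have "\<dots> = (\<Sum>l<m. gs_mu s b i l * gs_mu s b j l * gso_norm_sq s b l)"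
    by (intro sum.cong[OF refl], subst sum.remove[of _ l for l])
      (auto simp: gso_orthogonal' intro!: sum.neutral)
  finally show ?thesis .
qed

lemma ip_self_eq_sum_gso:
  assumes i: "i < m"
  shows "ip s (b i) (b i) = (\<Sum>l<i. (gs_coeff s b i l)\<^sup>2 * gso_norm_sq s b l) + gso_norm_sq s b i"
proof -
  have "ip s (b i) (b i) = (\<Sum>l<m. gs_mu s b i l * (gs_mu s b i l * gso_norm_sq s b l))"
    using ip_eq_sum_gso[OF i i] by (simp add: mult.assoc)
  also have "\<dots> = (\<Sum>l<i. gs_coeff s b i l * (gs_mu s b i l * gso_norm_sq s b l))
      + gs_mu s b i i * gso_norm_sq s b i"
    by (rule sum_gs_mu_row[OF i])
  also have "(\<Sum>l<i. gs_coeff s b i l * (gs_mu s b i l * gso_norm_sq s b l))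
      = (\<Sum>l<i. (gs_coeff s b i l)\<^sup>2 * gso_norm_sq s b l)"
    by (intro sum.cong) (simp_all add: gs_mu_def power2_eq_square)
  finally show ?thesis by (simp add: gs_mu_def)
qed

text \<open>The Gram matrix factors as \<open>M D M\<^sup>T\<close> with \<open>M\<close> unitriangular and \<open>D\<close> diagonal.\<close>

lemma det_gram_eq_prod_gso:
  "det (mat m m (\<lambda>(i, j). ip s (b i) (b j))) = (\<Prod>l<m. gso_norm_sq s b l)"
proof -
  define M where "M = mat m m (\<lambda>(i, l). gs_mu s b i l)"
  define D where "D = mat m m (\<lambda>(i, j). if i = j then gso_norm_sq s b i else 0)"
  have M: "M \<in> carrier_mat m m" and D: "D \<in> carrier_mat m m"
    by (auto simp: M_def D_def)
  have MD: "(M * D) $$ (i, l) = gs_mu s b i l * gso_norm_sq s b l" if "i < m" "l < m" for i l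
  proof -
    have "(M * D) $$ (i, l) = (\<Sum>l'\<in>{0..<m}. gs_mu s b i l' * (if l' = l then gso_norm_sq s b l else 0))"
      using that by (auto simp: M_def D_def scalar_prod_def intro!: sum.cong)
    thus ?thesis using that by (simp add: if_distrib cong: if_cong)
  qed
  have "mat m m (\<lambda>(i, j). ip s (b i) (b j)) = M * D * transpose_mat M"
  proof (rule eq_matI)
    fix i j assume "i < dim_row (M * D * transpose_mat M)" "j < dim_col (M * D * transpose_mat M)"
    hence ij: "i < m" "j < m" by (auto simp: M_def)
    have "(M * D * transpose_mat M) $$ (i, j) = (\<Sum>l\<in>{0..<m}. (M * D) $$ (i, l) * gs_mu s b j l)"
      using ij by (simp add: M_def D_def scalar_prod_def)
    also have "\<dots> = ip s (b i) (b j)"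
      using ij by (auto simp: MD ip_eq_sum_gso[OF ij] lessThan_atLeast0 ac_simps intro!: sum.cong)
    finally show "mat m m (\<lambda>(i, j). ip s (b i) (b j)) $$ (i, j) = (M * D * transpose_mat M) $$ (i, j)"
      using ij by simp
  qed (auto simp: M_def D_def)
  moreover have "det M = 1"
    by (subst det_lower_triangular[OF _ M])
      (auto simp: M_def gs_mu_def prod_list_diag_prod intro!: prod.neutral)
  moreover have "det D = (\<Prod>l<m. gso_norm_sq s b l)"
    by (subst det_upper_triangular[OF _ D])
      (auto simp: D_def upper_triangular_def prod_list_diag_prod lessThan_atLeast0 intro!: prod.cong)
  ultimately show ?thesis
    using M D by (simp add: det_mult[of _ m] det_transpose)
qed

subsection \<open>LLL-reduced bases\<close>

lemma LLL_reduced_gs_coeff_sq_le: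
  assumes "LLL_reduced s m b" "i < m" "j < i"
  shows "(gs_coeff s (rvecs b) i j)\<^sup>2 \<le> 1/4"
proof -
  have "\<bar>gs_coeff s (rvecs b) i j\<bar> \<le> 1/2"
    using assms unfolding LLL_reduced_def Let_def by blast
  hence "\<bar>gs_coeff s (rvecs b) i j\<bar>\<^sup>2 \<le> (1/2)\<^sup>2"
    by (intro power_mono) simp_all
  thus ?thesis by (simp add: power2_eq_square)
qed

lemma LLL_reduced_gso_norm_sq_le_double:
  assumes LLL: "LLL_reduced s m b" and l: "Suc l < m"
  shows "gso_norm_sq s (rvecs b) l \<le> 2 * gso_norm_sq s (rvecs b) (Suc l)"
proof -
  have "(3/4 - (gs_coeff s (rvecs b) (Suc l) l)\<^sup>2) * gso_norm_sq s (rvecs b) l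
      \<le> gso_norm_sq s (rvecs b) (Suc l)"
    using LLL l unfolding LLL_reduced_def Let_def
    by (auto dest!: spec[of _ "Suc l"])
  moreover have "1/2 * gso_norm_sq s (rvecs b) l
      \<le> (3/4 - (gs_coeff s (rvecs b) (Suc l) l)\<^sup>2) * gso_norm_sq s (rvecs b) l"
    using LLL_reduced_gs_coeff_sq_le[OF LLL l, of l] ip_self_nonneg
    by (intro mult_right_mono) auto
  ultimately show ?thesis by linarith
qed

lemma LLL_reduced_gso_norm_sq_mono:
  assumes LLL: "LLL_reduced s m b" and "j \<le> i" "i < m"
  shows "2 ^ j * gso_norm_sq s (rvecs b) j \<le> 2 ^ i * gso_norm_sq s (rvecs b) i"
  using assms(2,3)
proof (induction i rule: dec_induct)
  case (step n)
  hence "2 ^ j * gso_norm_sq s (rvecs b) j \<le> 2 ^ n * gso_norm_sq s (rvecs b) n"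
    by simp
  also have "\<dots> \<le> 2 ^ n * (2 * gso_norm_sq s (rvecs b) (Suc n))"
    using LLL_reduced_gso_norm_sq_le_double[OF LLL step.prems] by simp
  finally show ?case by (simp add: ac_simps)
qed simp

lemma LLL_reduced_norm_sq_le:
  assumes LLL: "LLL_reduced s m b" and i: "i < m"
  shows "ip s (rvec (b i)) (rvec (b i)) \<le> 2 ^ i * gso_norm_sq s (rvecs b) i"
proof -
  let ?N = "gso_norm_sq s (rvecs b)"
  have geometric_half: "(\<Sum>l<i. (1/2::real) ^ l) = 2 - 2 * (1/2) ^ i"
    by (induction i) auto
  have "(gs_coeff s (rvecs b) i l)\<^sup>2 * ?N l \<le> 1/4 * 2 ^ i * ?N i * (1/2) ^ l" if "l < i" for l
  proof -
    have "(gs_coeff s (rvecs b) i l)\<^sup>2 * ?N l \<le> 1/4 * ?N l"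
      using LLL_reduced_gs_coeff_sq_le[OF LLL i that] ip_self_nonneg by (intro mult_right_mono)
    also have "\<dots> = 1/4 * (1/2) ^ l * (2 ^ l * ?N l)"
      by (simp add: power_one_over)
    also have "\<dots> \<le> 1/4 * (1/2) ^ l * (2 ^ i * ?N i)"
      using LLL_reduced_gso_norm_sq_mono[OF LLL _ i, of l] that by (intro mult_left_mono) simp_all
    finally show ?thesis by (simp add: ac_simps)
  qed
  hence "(\<Sum>l<i. (gs_coeff s (rvecs b) i l)\<^sup>2 * ?N l) \<le> (\<Sum>l<i. 1/4 * 2 ^ i * ?N i * (1/2) ^ l)"
    by (intro sum_mono) simp
  also have "\<dots> = 1/4 * 2 ^ i * ?N i * (2 - 2 * (1/2) ^ i)"
    by (simp only: sum_distrib_left[symmetric] geometric_half)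
  also have "\<dots> = 2 ^ i * ?N i / 2 - ?N i / 2"
    by (simp add: field_simps)
  finally have "ip s (rvec (b i)) (rvec (b i)) \<le> 2 ^ i * ?N i / 2 + ?N i / 2"
    using ip_self_eq_sum_gso[OF i, of s "rvecs b"] by simp
  moreover have "1 * ?N i \<le> 2 ^ i * ?N i"
    by (rule mult_right_mono) (simp_all add: ip_self_nonneg)
  ultimately show ?thesis by linarith
qed

subsection \<open>Lattice bases and the lattice determinant\<close>

definition basis_mat :: "nat \<Rightarrow> nat \<Rightarrow> (nat \<Rightarrow> nat \<Rightarrow> int) \<Rightarrow> real mat" where
  "basis_mat s m b = mat m s (\<lambda>(i, j). real_of_int (b i j))"

lemma basis_mat_carrier [simp]: "basis_mat s m b \<in> carrier_mat m s"
  by (simp add: basis_mat_def)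

lemma gram_det_eq_det_basis_mat:
  "gram_det s m b = det (basis_mat s m b * transpose_mat (basis_mat s m b))"
proof -
  have "mat m m (\<lambda>(i, j). ip s (rvec (b i)) (rvec (b j))) = basis_mat s m b * transpose_mat (basis_mat s m b)"
    by (rule eq_matI) (auto simp: basis_mat_def ip_def rvec_def scalar_prod_def lessThan_atLeast0)
  thus ?thesis unfolding gram_det_def by simp
qed

lemma gram_det_eq_prod_gso: "gram_det s m b = (\<Prod>l<m. gso_norm_sq s (rvecs b) l)"
  unfolding gram_det_def by (rule det_gram_eq_prod_gso)

lemma basis_mat_transition:
  assumes "\<forall>i<m. b' i = (\<lambda>j. \<Sum>l<m. U i l * b l j)"
  shows "basis_mat s m b' = map_mat real_of_int (mat m m (\<lambda>(i, l). U i l)) * basis_mat s m b"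
  by (rule eq_matI) (use assms in \<open>auto simp: basis_mat_def scalar_prod_def lessThan_atLeast0\<close>)

lemma sum_delta_mult:
  fixes v :: "nat \<Rightarrow> 'a::comm_ring_1"
  assumes "l < m"
  shows "(\<Sum>i<m. (if i = l then 1 else 0) * v i) = v l"
  using assms by (subst sum.remove[of _ l]) auto

lemma lattice_basis_independent:
  assumes "lattice_basis s m L b" "\<And>j. j < s \<Longrightarrow> (\<Sum>i<m. c i * real_of_int (b i j)) = 0" "i < m"
  shows "c i = 0"
  using assms unfolding lattice_basis_def by blast

lemma lattice_basis_mem:
  assumes "lattice_basis s m L b" "i < m"
  shows "b i \<in> L"
proof -
  have "b i = (\<lambda>j. \<Sum>l<m. (if l = i then 1 else 0) * b l j)"
  proof
    fix j
    show "b i j = (\<Sum>l<m. (if l = i then 1 else 0) * b l j)"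
      using sum_delta_mult[OF assms(2), of "\<lambda>l. b l j"] by simp
  qed
  thus ?thesis using assms(1) unfolding lattice_basis_def by auto
qed

lemma det_mult_gram:
  fixes U B :: "'a::comm_ring_1 mat"
  assumes U: "U \<in> carrier_mat m m" and B: "B \<in> carrier_mat m s"
  shows "det ((U * B) * transpose_mat (U * B)) = det U * det U * det (B * transpose_mat B)"
proof -
  have Bt: "transpose_mat B \<in> carrier_mat s m" and Ut: "transpose_mat U \<in> carrier_mat m m"
    using U B by auto
  have "(U * B) * transpose_mat (U * B) = U * (B * transpose_mat B) * transpose_mat U"
    unfolding transpose_mult[OF U B]
    using assoc_mult_mat[OF U B mult_carrier_mat[OF Bt Ut]] assoc_mult_mat[OF B Bt Ut]
      assoc_mult_mat[OF U mult_carrier_mat[OF B Bt] Ut]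
    by simp
  thus ?thesis
    using U B Bt Ut by (simp add: det_mult[of _ m] det_transpose)
qed

lemma lattice_basis_transition_exists:
  assumes "lattice_basis s m L b" and "\<forall>i<m. b' i \<in> L"
  shows "\<exists>U. \<forall>i<m. b' i = (\<lambda>j. \<Sum>l<m. U i l * b l j)"
proof -
  have "\<forall>i\<in>{..<m}. \<exists>c. b' i = (\<lambda>j. \<Sum>l<m. c l * b l j)"
    using assms unfolding lattice_basis_def by blast
  from bchoice[OF this] show ?thesis by auto
qed

lemma lattice_basis_left_cancel:
  assumes b: "lattice_basis s m L b" and A: "A \<in> carrier_mat m m"
    and AB: "A * basis_mat s m b = basis_mat s m b"
  shows "A = 1\<^sub>m m"
proof (rule eq_matI)
  fix i l assume "i < dim_row (1\<^sub>m m)" "l < dim_col (1\<^sub>m m)"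
  hence il: "i < m" "l < m" by auto
  define c where "c = (\<lambda>l. A $$ (i, l) - (if l = i then 1 else 0))"
  have "(\<Sum>l<m. c l * real_of_int (b l j)) = 0" if j: "j < s" for j
  proof -
    have "real_of_int (b i j) = (A * basis_mat s m b) $$ (i, j)"
      using AB il j by (simp add: basis_mat_def)
    also have "\<dots> = (\<Sum>l<m. A $$ (i, l) * real_of_int (b l j))"
      using A il j by (simp add: basis_mat_def scalar_prod_def lessThan_atLeast0)
    moreover have "(\<Sum>l<m. (if l = i then 1 else 0) * real_of_int (b l j)) = real_of_int (b i j)"
      by (rule sum_delta_mult[OF il(1)])
    ultimately show ?thesis
      by (simp add: c_def left_diff_distrib sum_subtractf)
  qed
  hence "c l = 0"
    using lattice_basis_independent[OF b _ il(2)] by blast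
  thus "A $$ (i, l) = 1\<^sub>m m $$ (i, l)" using il by (simp add: c_def)
qed (use A in auto)

lemma lattice_basis_transition:
  assumes b: "lattice_basis s m L b" and b': "lattice_basis s m L b'"
  obtains U where "U \<in> carrier_mat m m" "basis_mat s m b' = U * basis_mat s m b"
    and "det U * det U = 1"
proof -
  obtain cU where cU: "\<forall>i<m. b' i = (\<lambda>j. \<Sum>l<m. cU i l * b l j)"
    using lattice_basis_transition_exists[OF b] lattice_basis_mem[OF b'] by blast
  obtain cV where cV: "\<forall>i<m. b i = (\<lambda>j. \<Sum>l<m. cV i l * b' l j)"
    using lattice_basis_transition_exists[OF b'] lattice_basis_mem[OF b] by blast
  define IU where "IU = mat m m (\<lambda>(i, l). cU i l)"
  define IV where "IV = mat m m (\<lambda>(i, l). cV i l)"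
  have IU: "IU \<in> carrier_mat m m" and IV: "IV \<in> carrier_mat m m"
    by (simp_all add: IU_def IV_def)
  have U: "basis_mat s m b' = map_mat real_of_int IU * basis_mat s m b"
    unfolding IU_def by (rule basis_mat_transition[OF cU])
  have V: "basis_mat s m b = map_mat real_of_int IV * basis_mat s m b'"
    unfolding IV_def by (rule basis_mat_transition[OF cV])
  have IUr: "map_mat real_of_int IU \<in> carrier_mat m m"
    and IVr: "map_mat real_of_int IV \<in> carrier_mat m m"
    using IU IV by simp_all
  have "map_mat real_of_int IV * map_mat real_of_int IU * basis_mat s m b = basis_mat s m b"
    unfolding assoc_mult_mat[OF IVr IUr basis_mat_carrier] U[symmetric] V[symmetric] ..
  hence "map_mat real_of_int IV * map_mat real_of_int IU = 1\<^sub>m m"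
    using IUr IVr by (intro lattice_basis_left_cancel[OF b]) auto
  hence "real_of_int (det IV * det IU) = 1"
    using det_mult[OF IVr IUr] by simp
  hence "det IV * det IU = 1"
    using of_int_eq_1_iff by blast
  hence "det IU = 1 \<or> det IU = -1"
    using zmult_eq_1_iff by blast
  hence "det (map_mat real_of_int IU) * det (map_mat real_of_int IU) = 1"
    by auto
  with U IU show ?thesis by (intro that) auto
qed

lemma lattice_basis_nonzero:
  assumes b: "lattice_basis s m L b" and l: "l < m"
  shows "\<exists>j<s. b l j \<noteq> 0"
proof (rule ccontr)
  assume "\<not> (\<exists>j<s. b l j \<noteq> 0)"
  hence "(\<Sum>i<m. (if i = l then 1 else 0) * real_of_int (b i j)) = 0" if "j < s" for j
    using sum_delta_mult[OF l, of "\<lambda>i. real_of_int (b i j)"] that by simp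
  hence "(if l = l then 1 else 0 :: real) = 0"
    by (rule lattice_basis_independent[OF b _ l])
  thus False by simp
qed

lemma lattice_det_eq_sqrt_gram_det:
  assumes b: "lattice_basis s m L b"
  shows "lattice_det s m L = sqrt (gram_det s m b)"
  unfolding lattice_det_def
proof (rule the_equality)
  fix d assume "\<exists>b'. lattice_basis s m L b' \<and> d = sqrt (gram_det s m b')"
  then obtain b' where b': "lattice_basis s m L b'" and d: "d = sqrt (gram_det s m b')"
    by blast
  obtain U where U: "U \<in> carrier_mat m m" "basis_mat s m b' = U * basis_mat s m b"
    and det_U: "det U * det U = 1"
    using lattice_basis_transition[OF b b'] .
  have "gram_det s m b' = det U * det U * gram_det s m b"
    unfolding gram_det_eq_det_basis_mat U(2) by (rule det_mult_gram[OF U(1) basis_mat_carrier])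
  thus "d = sqrt (gram_det s m b)"
    using det_U d by simp
qed (use b in blast)

lemma ip_rvec_self_ge_1:
  assumes "j < s" "v j \<noteq> 0"
  shows "1 \<le> ip s (rvec v) (rvec v)"
proof -
  have "1 \<le> \<bar>rvec v j\<bar>"
    using assms(2) by (simp add: rvec_def)
  hence "1 \<le> rvec v j * rvec v j"
    using mult_mono[of 1 "\<bar>rvec v j\<bar>" 1 "\<bar>rvec v j\<bar>"] by (simp add: abs_mult_self_eq)
  also have "\<dots> \<le> ip s (rvec v) (rvec v)"
    using assms(1) by (rule component_sq_le_ip_self)
  finally show ?thesis .
qed

lemma inf_norm_sq_le_ip_self:
  assumes "0 < s"
  shows "(real_of_int (inf_norm s v))\<^sup>2 \<le> ip s (rvec v) (rvec v)"
proof -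
  have "finite ((\<lambda>j. \<bar>v j\<bar>) ` {..<s})" "(\<lambda>j. \<bar>v j\<bar>) ` {..<s} \<noteq> {}"
    using assms by auto
  from Max_in[OF this] obtain j where j: "j < s" "inf_norm s v = \<bar>v j\<bar>"
    unfolding inf_norm_def by auto
  have "(real_of_int (inf_norm s v))\<^sup>2 = rvec v j * rvec v j"
    using j(2) by (simp add: rvec_def power2_eq_square)
  also have "\<dots> \<le> ip s (rvec v) (rvec v)"
    using j(1) by (rule component_sq_le_ip_self)
  finally show ?thesis .
qed

lemma member_le_prod:
  fixes f :: "'b \<Rightarrow> 'a::linordered_idom"
  assumes "finite A" "a \<in> A" "\<And>x. x \<in> A \<Longrightarrow> 1 \<le> f x"
  shows "f a \<le> prod f A"
proof -
  have "f a * 1 \<le> f a * prod f (A - {a})"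
    using assms by (intro mult_left_mono prod_ge_1) (auto intro: order.trans[OF zero_le_one])
  thus ?thesis using assms(1,2) by (simp add: prod.remove)
qed

lemma prod_power_2_eq_powr: "(\<Prod>l<m. (2::real) ^ l) = 2 powr (real m * (real m - 1) / 2)"
proof (induction m)
  case (Suc m)
  have "(\<Prod>l<Suc m. (2::real) ^ l) = 2 powr (real m * (real m - 1) / 2 + real m)"
    using Suc by (simp add: powr_add powr_realpow)
  also have "real m * (real m - 1) / 2 + real m = real (Suc m) * (real (Suc m) - 1) / 2"
    by (simp add: field_simps)
  finally show ?case .
qed simp

theorem LLL_reduced_inf_norm_le:
  assumes b: "lattice_basis s m L b" and LLL: "LLL_reduced s m b" and i: "i < m"
  shows "real_of_int (inf_norm s (b i)) \<le> 2 powr (real m * (real m - 1) / 4) * lattice_det s m L"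
proof -
  let ?norm_sq = "\<lambda>l. ip s (rvec (b l)) (rvec (b l))"
  have ge_1: "1 \<le> ?norm_sq l" if "l < m" for l
    using lattice_basis_nonzero[OF b that] ip_rvec_self_ge_1 by blast
  have gram_nonneg: "0 \<le> gram_det s m b"
    by (simp add: gram_det_eq_prod_gso ip_self_nonneg prod_nonneg)
  have "?norm_sq i \<le> (\<Prod>l<m. ?norm_sq l)"
    using i ge_1 by (intro member_le_prod) auto
  also have "\<dots> \<le> (\<Prod>l<m. 2 ^ l * gso_norm_sq s (rvecs b) l)"
    using LLL_reduced_norm_sq_le[OF LLL] ip_self_nonneg by (intro prod_mono) simp
  also have "\<dots> = 2 powr (real m * (real m - 1) / 2) * gram_det s m b"
    by (simp add: prod.distrib prod_power_2_eq_powr gram_det_eq_prod_gso)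
  also have "\<dots> = (2 powr (real m * (real m - 1) / 4) * lattice_det s m L)\<^sup>2"
    using gram_nonneg powr_power[of 2 "real m * (real m - 1) / 4" 2]
    by (simp add: lattice_det_eq_sqrt_gram_det[OF b] power_mult_distrib)
  finally have norm_sq_le: "?norm_sq i \<le> (2 powr (real m * (real m - 1) / 4) * lattice_det s m L)\<^sup>2" .
  have "0 < s"
    using lattice_basis_nonzero[OF b i] by auto
  with norm_sq_le
  have "(real_of_int (inf_norm s (b i)))\<^sup>2 \<le> (2 powr (real m * (real m - 1) / 4) * lattice_det s m L)\<^sup>2"
    using inf_norm_sq_le_ip_self[of s "b i"] by linarith
  thus ?thesis
    by (rule power2_le_imp_le) (simp add: lattice_det_eq_sqrt_gram_det[OF b] gram_nonneg)
qed

theorem corollary2p3: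
  fixes k :: "'a::field set" and x :: 'a and Ps :: "'a set list"
    and b :: "nat \<Rightarrow> nat \<Rightarrow> int"
  assumes k_field: "subfield k" and k_fin: "finite k"
    and full_const: "\<forall>z. algebraic_over k z \<longrightarrow> z \<in> k"
    and x_trans: "\<not> algebraic_over k x"
    and fin_ext: "finite_dim_mod (rat_fun_field k x) UNIV {0}"
    and coprime: "gcd (field_degree (rat_fun_field k x)) (card k) = 1"
    and Ps_places: "\<forall>P\<in>set Ps. is_place k P" and Ps_dist: "distinct Ps"
    and infinite_in_S: "\<forall>P. is_place k P \<and> x \<notin> ring_of P \<longrightarrow> P \<in> set Ps"
    and basis: "lattice_basis (length Ps) (length Ps - 1) (S_unit_lattice k Ps) b"
    and LLL: "LLL_reduced (length Ps) (length Ps - 1) b"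
  shows "\<forall>i < length Ps - 1. real_of_int (inf_norm (length Ps) (b i))
           \<le> 2 powr ((real (length Ps) - 1) * (real (length Ps) - 2) / 4)
             * lattice_det (length Ps) (length Ps - 1) (S_unit_lattice k Ps)"
proof (intro allI impI)
  fix i assume i: "i < length Ps - 1"
  hence "real (length Ps - 1) = real (length Ps) - 1"
    by (simp add: of_nat_diff)
  with LLL_reduced_inf_norm_le[OF basis LLL i]
  show "real_of_int (inf_norm (length Ps) (b i))
      \<le> 2 powr ((real (length Ps) - 1) * (real (length Ps) - 2) / 4)
        * lattice_det (length Ps) (length Ps - 1) (S_unit_lattice k Ps)"
    by (simp add: algebra_simps)
qed

end
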